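(* Let $t\ge1$ be an integer, $N=\frac{t(t-1)}{2}$, let $(\theta_1,\dots,\theta_t)\in\mathbb{R}^t$, and let $p_1<p_2<\cdots<p_{N+1}$ be $N+1$ prime numbers; set $p_0:=1$. Then there is at least one $l\in\{1,\dots,N+1\}$ such that $$\min_{\substack{1\le i\le j\le t\\ k\in\mathbb{Z},\ p_l\nmid k}}\left|\,|\theta_i-\theta_j|-\frac{k}{p_l}\right|\ \ge\ \frac{1}{2p_{N}p_{N+1}}.$$ *)

theory Defs
  imports Complex_Main "HOL-Computational_Algebra.Primes"
begin

end

theory Submission
  imports Defs
begin

text \<open>
  Suppose every prime \<open>p\<^sub>l\<close> fails, i.e. for each \<open>l\<close> some difference \<open>|\<theta>\<^sub>i - \<theta>\<^sub>j|\<close> lies closer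
  than \<open>d = 1 / (2 p\<^sub>N p\<^sub>N\<^sub>+\<^sub>1)\<close> to a fraction \<open>k / p\<^sub>l\<close> in lowest terms. The pair \<open>i = j\<close> cannot
  be responsible, since \<open>|k / p\<^sub>l| \<ge> 1 / p\<^sub>l \<ge> d\<close>. Two distinct primes \<open>p\<^sub>l, p\<^sub>m\<close> cannot be served by
  the same pair \<open>i < j\<close> either: the two fractions would be closer than \<open>2d \<le> 1 / (p\<^sub>l p\<^sub>m)\<close>,
  yet they differ by a nonzero multiple of \<open>1 / (p\<^sub>l p\<^sub>m)\<close>. So the \<open>N + 1\<close> primes would inject
  into the \<open>N\<close> pairs \<open>i < j\<close>.
\<close>

lemma coprime_fractions_dist_ge:
  fixes a b :: nat and k k' :: int
  assumes "coprime a b" "a > 0" "b > 0" "\<not> int a dvd k"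
  shows "1 / (real a * real b) \<le> \<bar>k / a - k' / b\<bar>"
proof -
  have "k * int b - k' * int a \<noteq> 0"
  proof
    assume "k * int b - k' * int a = 0"
    then have "int a dvd k * int b" by (metis dvd_triv_right eq_iff_diff_eq_0)
    with assms(1,4) show False by (simp add: coprime_dvd_mult_left_iff)
  qed
  then have "1 \<le> \<bar>real_of_int (k * int b - k' * int a)\<bar>" by linarith
  also have "\<dots> = real a * real b * \<bar>k / a - k' / b\<bar>"
    using assms(2,3) by (simp add: field_simps abs_mult)
  finally show ?thesis
    using assms(2,3) by (simp add: divide_le_eq mult.commute)
qed

lemma finite_strict_pairs: "finite {(i::nat, j). 1 \<le> i \<and> i < j \<and> j \<le> t}"
  by (rule finite_subset[of _ "{..t} \<times> {..t}"]) auto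

lemma card_strict_pairs: "2 * card {(i::nat, j). 1 \<le> i \<and> i < j \<and> j \<le> t} = t * (t - 1)"
proof (induction t)
  case 0
  then show ?case by (simp add: card_eq_0_iff)
next
  case (Suc t)
  let ?P = "\<lambda>t. {(i::nat, j). 1 \<le> i \<and> i < j \<and> j \<le> t}"
  have split: "?P (Suc t) = ?P t \<union> (\<lambda>i. (i, Suc t)) ` {1..t}"
    by (auto simp: le_Suc_eq)
  have "card (?P (Suc t)) = card (?P t) + t"
    unfolding split using finite_strict_pairs
    by (subst card_Un_disjoint) (auto simp: card_image inj_on_def)
  with Suc show ?case by (cases t) (auto simp: algebra_simps)
qed

lemma one_div_le_abs_div:
  fixes q :: nat and k :: int
  assumes "k \<noteq> 0"
  shows "1 / q \<le> \<bar>k / q\<bar>"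
  using assms by (simp add: abs_div_pos divide_right_mono)

lemma strict_mono_on_mult_le_last_two:
  fixes p :: "nat \<Rightarrow> nat"
  assumes mono: "strict_mono_on {1..n+1} p"
    and "l \<in> {1..n+1}" "m \<in> {1..n+1}" "l \<noteq> m"
  shows "p l * p m \<le> p n * p (n+1)"
proof -
  have "p (min l m) \<le> p n" "p (max l m) \<le> p (n+1)"
    using assms by (auto intro!: strict_mono_on_leD[OF mono])
  moreover have "p l * p m = p (min l m) * p (max l m)"
    by (cases "l \<le> m") (simp_all add: min_def max_def)
  ultimately show ?thesis by (simp add: mult_le_mono)
qed

lemma strict_mono_on_le_mult_last:
  fixes p :: "nat \<Rightarrow> nat"
  assumes mono: "strict_mono_on {1..n+1} p"
    and "l \<in> {1..n+1}" "0 < p n"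
  shows "p l \<le> p n * p (n+1)"
  using strict_mono_on_leD[OF mono, of l "n+1"] assms(2,3) by (simp add: le_trans)

lemma exists_prime_far_from_fractions:
  fixes q :: "'l \<Rightarrow> nat" and x :: "'p \<Rightarrow> real" and d :: real
  assumes "finite P" "finite L" "card P < card L"
    and prime: "\<And>l. l \<in> L \<Longrightarrow> prime (q l)"
    and inj: "inj_on q L"
    and small: "\<And>l m. l \<in> L \<Longrightarrow> m \<in> L \<Longrightarrow> l \<noteq> m \<Longrightarrow> 2 * d * q l * q m \<le> 1"
  shows "\<exists>l\<in>L. \<forall>\<rho>\<in>P. \<forall>k::int. \<not> int (q l) dvd k \<longrightarrow> d \<le> \<bar>x \<rho> - k / q l\<bar>"
proof (rule ccontr)
  assume "\<not> ?thesis"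
  then have "\<forall>l\<in>L. \<exists>\<rho>\<in>P. \<exists>k::int. \<not> int (q l) dvd k \<and> \<bar>x \<rho> - k / q l\<bar> < d"
    by (auto simp: not_le)
  then obtain g kk where g: "\<And>l. l \<in> L \<Longrightarrow> g l \<in> P"
    and kk: "\<And>l. l \<in> L \<Longrightarrow> \<not> int (q l) dvd kk l \<and> \<bar>x (g l) - kk l / q l\<bar> < d"
    by metis
  have "inj_on g L"
  proof (rule inj_onI, rule ccontr)
    fix l m assume lm: "l \<in> L" "m \<in> L" "g l = g m" "l \<noteq> m"
    have pos: "q l > 0" "q m > 0"
      using lm prime by (simp_all add: prime_gt_0_nat)
    have "coprime (q l) (q m)"
      using lm prime inj by (simp add: primes_coprime inj_on_eq_iff)
    then have "1 / (real (q l) * real (q m)) \<le> \<bar>kk l / q l - kk m / q m\<bar>"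
      using coprime_fractions_dist_ge pos kk[OF lm(1)] by blast
    also have "\<dots> < 2 * d"
      using kk[OF lm(1)] kk[OF lm(2)] unfolding lm(3) by linarith
    finally show False
      using small[OF lm(1,2,4)] pos by (simp add: field_simps)
  qed
  then have "card L \<le> card P"
    using g \<open>finite P\<close> by (intro card_inj_on_le) auto
  with \<open>card P < card L\<close> show False by simp
qed

theorem lemma4:
  fixes t N :: nat and \<theta> :: "nat \<Rightarrow> real" and p :: "nat \<Rightarrow> nat"
  assumes "t \<ge> 1"
    and "N = t * (t - 1) div 2"
    and "\<forall>l\<in>{1..N+1}. prime (p l)"
    and "\<forall>a\<in>{1..N+1}. \<forall>b\<in>{1..N+1}. a < b \<longrightarrow> p a < p b"
    and "p 0 = 1"
  shows "\<exists>l\<in>{1..N+1}. \<forall>i\<in>{1..t}. \<forall>j\<in>{i..t}. \<forall>k::int.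
           \<not> (int (p l) dvd k) \<longrightarrow>
           \<bar>\<bar>\<theta> i - \<theta> j\<bar> - real_of_int k / real (p l)\<bar>
             \<ge> 1 / (2 * real (p N) * real (p (N+1)))"
proof -
  define d where "d = 1 / (2 * real (p N) * real (p (N+1)))"
  define P where "P = {(i::nat, j). 1 \<le> i \<and> i < j \<and> j \<le> t}"
  have mono: "strict_mono_on {1..N+1} p"
    using assms(4) by (intro strict_mono_onI) blast
  \<comment> \<open>\<open>p 0 = 1\<close> matters only for \<open>t = 1\<close>, where \<open>p N = p 0\<close>.\<close>
  have pos: "0 < p l" if "l \<le> N + 1" for l
    using that assms(3,5) prime_gt_0_nat by (cases "l = 0") auto
  have "finite P"
    unfolding P_def by (rule finite_strict_pairs)
  moreover have "card P < card {1..N+1}"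
    using card_strict_pairs[of t] assms(2) unfolding P_def by simp
  moreover have "2 * d * p l * p m \<le> 1" if "l \<in> {1..N+1}" "m \<in> {1..N+1}" "l \<noteq> m" for l m
    using strict_mono_on_mult_le_last_two[OF mono that] pos[of N] pos[of "N+1"]
    unfolding d_def by (simp add: field_simps flip: of_nat_mult)
  ultimately obtain l where l: "l \<in> {1..N+1}" and far:
    "\<forall>(i, j)\<in>P. \<forall>k::int. \<not> int (p l) dvd k \<longrightarrow> d \<le> \<bar>\<bar>\<theta> i - \<theta> j\<bar> - k / p l\<bar>"
    using exists_prime_far_from_fractions[of P "{1..N+1}" p d "\<lambda>(i, j). \<bar>\<theta> i - \<theta> j\<bar>"]
      assms(3) strict_mono_on_imp_inj_on[OF mono] by (auto simp: case_prod_beta)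
  have diag: "d \<le> \<bar>k / p l\<bar>" if "\<not> int (p l) dvd k" for k :: int
  proof -
    have "real (p l) \<le> 2 * (real (p N) * real (p (N+1)))"
      using strict_mono_on_le_mult_last[OF mono l pos[of N]] by (simp flip: of_nat_mult)
    then have "d \<le> 1 / p l"
      using l pos[of l] unfolding d_def by (simp add: frac_le mult.assoc)
    also have "\<dots> \<le> \<bar>k / p l\<bar>"
      using that by (intro one_div_le_abs_div) auto
    finally show ?thesis .
  qed
  show ?thesis
  proof (intro bexI[OF _ l] ballI allI impI)
    fix i j and k :: int
    assume "i \<in> {1..t}" "j \<in> {i..t}" "\<not> int (p l) dvd k"
    then show "1 / (2 * real (p N) * real (p (N+1))) \<le> \<bar>\<bar>\<theta> i - \<theta> j\<bar> - k / p l\<bar>"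
      using far diag unfolding d_def P_def by (cases "i = j") auto
  qed
qed

end
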